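(* Let $u\in\mathcal H_k$, let $\Lambda\subset\mathcal H_k'$ satisfy $\sup_{\lambda\in\Lambda}\|v_\lambda\|_{\mathcal H_k}\le1$, and let $\lambda_1,\lambda_2,\dots$ be selected from $\Lambda$ by a PDE-$\beta$-greedy algorithm applied to $u$, with $r_i:=u-\Pi_{V(\Lambda_i)}(u)$. Then for $n=1,2,\dots$: (a) if $\beta\in[0,1]$: $$\Big[\prod_{i=n+1}^{2n}\sup_{\lambda\in\Lambda}|\lambda(r_i)|\Big]^{1/n}\le n^{-\beta/2}\,\|r_{n+1}\|_{\mathcal H_k}\,\Big[\prod_{i=n+1}^{2n}P_{\Lambda_i}(\lambda_{i+1})\Big]^{1/n};$$ (b) if $\beta\in(1,\infty)$: $$\Big[\prod_{i=n+1}^{2n}\sup_{\lambda\in\Lambda}|\lambda(r_i)|\Big]^{1/n}\le n^{-1/2}\,\|r_{n+1}\|_{\mathcal H_k}\,\Big[\prod_{i=n+1}^{2n}P_{\Lambda_i}(\lambda_{i+1})^{1/\beta}\Big]^{1/n}.$$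
   Context: $\mathcal H_k$ is the reproducing kernel Hilbert space of a kernel $k$; each $\lambda\in\mathcal H_k'$ has Riesz representer $v_\lambda$. For $\Lambda_i=\{\lambda_1,\dots,\lambda_i\}$ ($\Lambda_0=\emptyset$), $V(\Lambda_i)=\mathrm{span}\{v_\mu:\mu\in\Lambda_i\}$, $\Pi_{V(\Lambda_i)}$ the orthogonal projection, and $P_{\Lambda_i}(\lambda):=\|v_\lambda-\Pi_{V(\Lambda_i)}v_\lambda\|_{\mathcal H_k}$ the generalized power function. A PDE-$\beta$-greedy algorithm selects, for $\beta\in[0,\infty)$, $\lambda_{n+1}\in\arg\max_{\lambda\in\Lambda\setminus\Lambda_n,\ \lambda\neq0}|\lambda(u-\Pi_{V(\Lambda_n)}u)|^{\beta}\,P_{\Lambda_n}(\lambda)^{1-\beta}$, and for $\beta=\infty$, $\lambda_{n+1}\in\arg\max_{\lambda\in\Lambda\setminus\Lambda_n,\ \lambda\ne0}|\lambda(u-\Pi_{V(\Lambda_n)}u)|/P_{\Lambda_n}(\lambda)$ (maximizers assumed to exist). *)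

theory Defs
  imports "HOL-Analysis.Analysis"
begin

text \<open>Functionals lambda in the dual of the Hilbert space are represented by their
Riesz representers v_lambda, so that lambda(f) = v_lambda \<bullet> f.\<close>

definition orth_proj :: "'a::real_inner set \<Rightarrow> 'a \<Rightarrow> 'a" where
  "orth_proj S u = (THE p. p \<in> span S \<and> (\<forall>w\<in>span S. inner (u - p) w = 0))"

definition power_fun :: "'a::real_inner set \<Rightarrow> 'a \<Rightarrow> real" where
  "power_fun S v = norm (v - orth_proj S v)"

definition sel_set :: "(nat \<Rightarrow> 'a) \<Rightarrow> nat \<Rightarrow> 'a set" where
  "sel_set lam i = lam ` {1..i}"

definition resid :: "'a::real_inner \<Rightarrow> (nat \<Rightarrow> 'a) \<Rightarrow> nat \<Rightarrow> 'a" where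
  "resid u lam i = u - orth_proj (sel_set lam i) u"

text \<open>Selection criterion a^beta * p^(1-beta), with a^0 = 1 for beta = 0 and the
convention 0 * infinity = 0 (realised by 0 powr negative = 0).\<close>
definition greedy_crit :: "real \<Rightarrow> real \<Rightarrow> real \<Rightarrow> real" where
  "greedy_crit \<beta> a p = (if \<beta> = 0 then p else a powr \<beta> * p powr (1 - \<beta>))"

definition pde_beta_greedy :: "real \<Rightarrow> 'a::real_inner set \<Rightarrow> 'a \<Rightarrow> (nat \<Rightarrow> 'a) \<Rightarrow> bool" where
  "pde_beta_greedy \<beta> Lam u lam \<longleftrightarrow>
     (\<forall>n. lam (Suc n) \<in> Lam - sel_set lam n \<and> lam (Suc n) \<noteq> 0 \<and>
        (\<forall>v\<in>Lam - sel_set lam n. v \<noteq> 0 \<longrightarrow>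
           greedy_crit \<beta> \<bar>inner v (resid u lam n)\<bar> (power_fun (sel_set lam n) v)
           \<le> greedy_crit \<beta> \<bar>inner (lam (Suc n)) (resid u lam n)\<bar>
                (power_fun (sel_set lam n) (lam (Suc n)))))"

end

theory Submission
  imports Defs
begin

text \<open>Since r_i is orthogonal to V(\<Lambda>_i), |\<lambda>(r_i)| \<le> P_\<Lambda>_i(\<lambda>) \<parallel>r_i\<parallel>, and adding
  \<lambda>_{i+1} to the selection lowers \<parallel>r\<parallel>^2 by d_i \<ge> \<lambda>_{i+1}(r_i)^2 / P_\<Lambda>_i(\<lambda>_{i+1})^2.
  The selection rule transfers this bound from \<lambda>_{i+1} to every \<lambda> \<in> \<Lambda>: the supremum of
  |\<lambda>(r_i)| is at most \<parallel>r_i\<parallel>^(1-\<beta>) P_\<Lambda>_i(\<lambda>_{i+1}) d_i^(\<beta>/2) for \<beta> \<le> 1, and at most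
  P_\<Lambda>_i(\<lambda>_{i+1})^(1/\<beta>) d_i^(1/2) for \<beta> > 1, where P \<le> \<parallel>v_\<lambda>\<parallel> \<le> 1 is used.
  In the product over i = n+1..2n the d_i telescope to at most \<parallel>r_{n+1}\<parallel>^2, so by AM-GM
  their geometric mean is at most \<parallel>r_{n+1}\<parallel>^2 / n.\<close>

lemma orth_proj_exists:
  fixes S :: "'a::real_inner set"
  assumes "finite S"
  shows "\<exists>p\<in>span S. \<forall>w\<in>span S. inner (u - p) w = 0"
  using assms
proof (induction S arbitrary: u rule: finite_induct)
  case empty
  show ?case by auto
next
  case (insert a S)
  obtain q where q: "q \<in> span S" "\<forall>w\<in>span S. inner (u - q) w = 0"
    using insert.IH by blast
  obtain qa where qa: "qa \<in> span S" "\<forall>w\<in>span S. inner (a - qa) w = 0"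
    using insert.IH by blast
  define w where "w = a - qa"
  have span_sub: "span S \<subseteq> span (insert a S)"
    by (simp add: span_mono subset_insertI)
  show ?case
  proof (cases "w = 0")
    case True
    then have "span (insert a S) = span S"
      using qa(1) by (simp add: w_def span_redundant)
    then show ?thesis using q by auto
  next
    case False
    define p where "p = q + (inner (u - q) w / inner w w) *\<^sub>R w"
    have "w \<in> span (insert a S)"
      unfolding w_def using qa(1) span_sub by (meson insertI1 span_base span_diff subsetD)
    then have p_span: "p \<in> span (insert a S)"
      unfolding p_def using q(1) span_sub by (meson span_add span_scale subsetD)
    have orth_S: "\<forall>x\<in>span S. inner (u - p) x = 0"
      using q(2) qa(2) by (auto simp: p_def w_def inner_diff_left inner_add_left)
    have "inner (u - p) w = 0"
      using False by (simp add: p_def inner_diff_left inner_add_left)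
    moreover have "inner (u - p) qa = 0"
      using orth_S qa(1) by blast
    ultimately have "inner (u - p) a = 0"
      by (simp add: w_def inner_diff_right)
    with orth_S have "\<forall>x\<in>insert a S. orthogonal (u - p) x"
      by (auto simp: orthogonal_def intro: span_base)
    then have "\<forall>x\<in>span (insert a S). inner (u - p) x = 0"
      using orthogonal_to_span by (auto simp: orthogonal_def)
    with p_span show ?thesis by blast
  qed
qed

lemma orth_proj_unique:
  fixes S :: "'a::real_inner set"
  assumes "p \<in> span S" "\<forall>w\<in>span S. inner (u - p) w = 0"
    and "q \<in> span S" "\<forall>w\<in>span S. inner (u - q) w = 0"
  shows "p = q"
proof -
  have pq: "p - q \<in> span S"
    using assms by (simp add: span_diff)
  have "inner (p - q) (p - q) = inner (u - q) (p - q) - inner (u - p) (p - q)"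
    by (simp add: inner_diff_left)
  also have "\<dots> = 0"
    using assms pq by simp
  finally show ?thesis by simp
qed

lemma
  fixes S :: "'a::real_inner set"
  assumes "finite S"
  shows orth_proj_in_span: "orth_proj S u \<in> span S"
    and orth_proj_orthogonal: "w \<in> span S \<Longrightarrow> inner (u - orth_proj S u) w = 0"
proof -
  have "\<exists>!p. p \<in> span S \<and> (\<forall>w\<in>span S. inner (u - p) w = 0)"
    using orth_proj_exists[OF assms] orth_proj_unique by blast
  from theI'[OF this] show "orth_proj S u \<in> span S" "w \<in> span S \<Longrightarrow> inner (u - orth_proj S u) w = 0"
    unfolding orth_proj_def by auto
qed

lemma orth_proj_min_norm:
  fixes S :: "'a::real_inner set"
  assumes "finite S" "p \<in> span S"
  shows "norm (u - orth_proj S u) \<le> norm (u - p)"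
proof -
  let ?P = "orth_proj S u"
  have "?P - p \<in> span S"
    using orth_proj_in_span[OF assms(1)] assms(2) by (simp add: span_diff)
  then have "orthogonal (u - ?P) (?P - p)"
    using orth_proj_orthogonal[OF assms(1)] by (simp add: orthogonal_def)
  moreover have "u - p = (u - ?P) + (?P - p)" by simp
  ultimately have "(norm (u - p))\<^sup>2 = (norm (u - ?P))\<^sup>2 + (norm (?P - p))\<^sup>2"
    by (metis norm_add_Pythagorean)
  then show ?thesis
    by (simp add: power2_le_imp_le)
qed

lemma orth_proj_residual_antimono:
  fixes S :: "'a::real_inner set"
  assumes "finite T" "S \<subseteq> T" "finite S"
  shows "norm (u - orth_proj T u) \<le> norm (u - orth_proj S u)"
  using assms orth_proj_in_span[OF assms(3)] span_mono[OF assms(2)]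
  by (blast intro: orth_proj_min_norm)

lemma power_fun_le_norm:
  fixes S :: "'a::real_inner set"
  assumes "finite S"
  shows "power_fun S v \<le> norm v"
  unfolding power_fun_def using orth_proj_min_norm[OF assms span_zero, of v] by simp

lemma inner_residual_eq:
  fixes S :: "'a::real_inner set"
  assumes "finite S"
  shows "inner v (u - orth_proj S u) = inner (v - orth_proj S v) (u - orth_proj S u)"
  using orth_proj_orthogonal[OF assms orth_proj_in_span[OF assms, of v], of u]
  by (simp add: inner_diff_left inner_commute[of "orth_proj S v"])

lemma abs_inner_residual_le:
  fixes S :: "'a::real_inner set"
  assumes "finite S"
  shows "\<bar>inner v (u - orth_proj S u)\<bar> \<le> power_fun S v * norm (u - orth_proj S u)"
  using Cauchy_Schwarz_ineq2[of "v - orth_proj S v" "u - orth_proj S u"]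
  by (simp add: power_fun_def inner_residual_eq[OF assms, symmetric])

lemma orth_proj_insert_decrease:
  fixes S :: "'a::real_inner set" and u v :: 'a
  assumes S: "finite S"
  defines "r \<equiv> u - orth_proj S u" and "r' \<equiv> u - orth_proj (insert v S) u"
  shows "(inner v r)\<^sup>2 \<le> (power_fun S v)\<^sup>2 * ((norm r)\<^sup>2 - (norm r')\<^sup>2)"
proof -
  define w where "w = v - orth_proj S v"
  define a where "a = inner v r"
  have decrease_nonneg: "0 \<le> (norm r)\<^sup>2 - (norm r')\<^sup>2"
    using orth_proj_residual_antimono[of "insert v S" S u] S
    by (simp add: r_def r'_def subset_insertI power_mono)
  have "inner v r = inner w r"
    unfolding r_def w_def by (rule inner_residual_eq[OF S])
  then have rw: "inner r w = a"
    by (simp add: a_def inner_commute)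
  show ?thesis
  proof (cases "w = 0")
    case True
    then show ?thesis
      using rw decrease_nonneg by (simp add: a_def)
  next
    case False
    define c where "c = a / (norm w)\<^sup>2"
    have span_sub: "span S \<subseteq> span (insert v S)"
      by (simp add: span_mono subset_insertI)
    have "w \<in> span (insert v S)"
      unfolding w_def using orth_proj_in_span[OF S] span_sub
      by (meson insertI1 span_base span_diff subsetD)
    then have "orth_proj S u + c *\<^sub>R w \<in> span (insert v S)"
      using orth_proj_in_span[OF S, of u] span_sub by (meson span_add span_scale subsetD)
    then have "norm r' \<le> norm (u - (orth_proj S u + c *\<^sub>R w))"
      unfolding r'_def using S by (simp add: orth_proj_min_norm)
    then have "norm r' \<le> norm (r - c *\<^sub>R w)"
      by (simp add: r_def diff_diff_eq)
    then have "(norm r')\<^sup>2 \<le> (norm (r - c *\<^sub>R w))\<^sup>2"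
      by (simp add: power_mono)
    also have "(norm (r - c *\<^sub>R w))\<^sup>2 = (norm r)\<^sup>2 - 2 * c * a + c\<^sup>2 * (norm w)\<^sup>2"
      unfolding power2_norm_eq_inner
      by (simp add: inner_diff_left inner_diff_right rw inner_commute[of w r] algebra_simps power2_eq_square)
    also have "\<dots> = (norm r)\<^sup>2 - a\<^sup>2 / (norm w)\<^sup>2"
      using False by (simp add: c_def field_simps power2_eq_square)
    finally have "a\<^sup>2 / (norm w)\<^sup>2 \<le> (norm r)\<^sup>2 - (norm r')\<^sup>2"
      by linarith
    then show ?thesis
      using False by (simp add: a_def w_def power_fun_def divide_le_eq mult.commute)
  qed
qed

lemma finite_sel_set [simp]: "finite (sel_set lam i)"
  by (simp add: sel_set_def)

lemma sel_set_Suc: "sel_set lam (Suc i) = insert (lam (Suc i)) (sel_set lam i)"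
  by (auto simp: sel_set_def atLeastAtMostSuc_conv)

lemma sel_set_mono: "i \<le> j \<Longrightarrow> sel_set lam i \<subseteq> sel_set lam j"
  by (auto simp: sel_set_def)

lemma norm_resid_antimono:
  fixes u :: "'a::real_inner"
  assumes "i \<le> j"
  shows "norm (resid u lam j) \<le> norm (resid u lam i)"
  unfolding resid_def
  by (rule orth_proj_residual_antimono[OF finite_sel_set sel_set_mono[OF assms] finite_sel_set])

lemma abs_inner_resid_le:
  fixes u :: "'a::real_inner"
  shows "\<bar>inner v (resid u lam i)\<bar> \<le> power_fun (sel_set lam i) v * norm (resid u lam i)"
  unfolding resid_def by (rule abs_inner_residual_le[OF finite_sel_set])

definition resid_decrease :: "'a::real_inner \<Rightarrow> (nat \<Rightarrow> 'a) \<Rightarrow> nat \<Rightarrow> real" where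
  "resid_decrease u lam i = (norm (resid u lam i))\<^sup>2 - (norm (resid u lam (Suc i)))\<^sup>2"

lemma resid_decrease_nonneg: "0 \<le> resid_decrease u lam i"
  using norm_resid_antimono[of i "Suc i" u lam]
  by (simp add: resid_decrease_def power_mono)

lemma sum_resid_decrease_le: "(\<Sum>i=m..k. resid_decrease u lam i) \<le> (norm (resid u lam m))\<^sup>2"
proof (cases "m \<le> Suc k")
  case True
  have "(\<Sum>i=m..k. resid_decrease u lam i)
      = (norm (resid u lam m))\<^sup>2 - (norm (resid u lam (Suc k)))\<^sup>2"
    using sum_Suc_diff[OF True, of "\<lambda>i. - (norm (resid u lam i))\<^sup>2"]
    by (simp add: resid_decrease_def)
  then show ?thesis by simp
qed simp

lemma inner_next_resid_sq_le:
  fixes u :: "'a::real_inner"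
  shows "(inner (lam (Suc i)) (resid u lam i))\<^sup>2
    \<le> (power_fun (sel_set lam i) (lam (Suc i)))\<^sup>2 * resid_decrease u lam i"
  using orth_proj_insert_decrease[where S="sel_set lam i" and u=u and v="lam (Suc i)"]
  by (simp add: resid_decrease_def resid_def sel_set_Suc)

text \<open>Functionals with \<lambda>(r_i) \<noteq> 0 are neither zero nor already selected,
  so they compete in the selection rule.\<close>

lemma pde_beta_greedy_crit_le:
  fixes u :: "'a::real_inner"
  assumes greedy: "pde_beta_greedy \<beta> Lam u lam" and v: "v \<in> Lam"
    and nz: "inner v (resid u lam i) \<noteq> 0"
  shows "greedy_crit \<beta> \<bar>inner v (resid u lam i)\<bar> (power_fun (sel_set lam i) v)
    \<le> greedy_crit \<beta> \<bar>inner (lam (Suc i)) (resid u lam i)\<bar> (power_fun (sel_set lam i) (lam (Suc i)))"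
proof -
  have "v \<notin> sel_set lam i"
    using nz orth_proj_orthogonal[OF finite_sel_set span_base, of v lam i u]
    by (auto simp: resid_def inner_commute)
  moreover have "v \<noteq> 0" using nz by auto
  ultimately show ?thesis
    using greedy v unfolding pde_beta_greedy_def by blast
qed

lemma greedy_crit_le_decrease:
  fixes A P d \<beta> :: real
  assumes "0 < \<beta>" "0 \<le> A" "0 \<le> P" "0 \<le> d" "A\<^sup>2 \<le> P\<^sup>2 * d"
  shows "A powr \<beta> * P powr (1 - \<beta>) \<le> P * d powr (\<beta> / 2)"
proof (cases "P = 0")
  case True
  then show ?thesis using assms by simp
next
  case False
  have "A\<^sup>2 \<le> (P * sqrt d)\<^sup>2"
    using assms by (simp add: power_mult_distrib)
  then have "A \<le> P * sqrt d"
    using assms by (meson power2_le_imp_le mult_nonneg_nonneg real_sqrt_ge_zero)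
  then have "A powr \<beta> \<le> (P * d powr (1 / 2)) powr \<beta>"
    using assms by (simp add: powr_mono2 powr_half_sqrt)
  also have "\<dots> = P powr \<beta> * d powr (\<beta> / 2)"
    by (simp add: powr_mult powr_powr)
  finally have "A powr \<beta> * P powr (1 - \<beta>) \<le> P powr \<beta> * d powr (\<beta> / 2) * P powr (1 - \<beta>)"
    by (simp add: mult_right_mono)
  also have "\<dots> = P * d powr (\<beta> / 2)"
    using False assms by (simp add: mult.commute mult.left_commute flip: powr_add)
  finally show ?thesis .
qed

lemma le_of_greedy_crit_le1:
  fixes a p R M \<beta> :: real
  assumes "0 < \<beta>" "\<beta> \<le> 1" "0 \<le> a" "a \<le> R * p" "0 \<le> p" "0 \<le> R" "0 \<le> M"
    and crit: "0 < a \<Longrightarrow> a powr \<beta> * p powr (1 - \<beta>) \<le> M"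
  shows "a \<le> R powr (1 - \<beta>) * M"
proof (cases "a = 0")
  case True
  then show ?thesis using assms by simp
next
  case False
  then have a_pos: "0 < a" using assms by simp
  have "a = a powr \<beta> * a powr (1 - \<beta>)"
    using a_pos by (simp flip: powr_add)
  also have "\<dots> \<le> a powr \<beta> * (R * p) powr (1 - \<beta>)"
    using assms a_pos by (intro mult_left_mono powr_mono2) auto
  also have "\<dots> = R powr (1 - \<beta>) * (a powr \<beta> * p powr (1 - \<beta>))"
    by (simp add: powr_mult)
  also have "\<dots> \<le> R powr (1 - \<beta>) * M"
    using crit[OF a_pos] by (intro mult_left_mono) auto
  finally show ?thesis .
qed

lemma le_of_greedy_crit_gt1:
  fixes a p R M \<beta> :: real
  assumes "1 < \<beta>" "0 \<le> a" "a \<le> R * p" "0 \<le> p" "p \<le> 1" "0 \<le> R" "0 \<le> M"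
    and crit: "0 < a \<Longrightarrow> a powr \<beta> * p powr (1 - \<beta>) \<le> M"
  shows "a \<le> M powr (1 / \<beta>)"
proof (cases "a = 0")
  case True
  then show ?thesis using assms by simp
next
  case False
  then have a_pos: "0 < a" using assms by simp
  then have "0 < p"
    using assms by (cases "p = 0") auto
  have "p powr (\<beta> - 1) \<le> 1"
    using powr_mono2[of "\<beta> - 1" p 1] assms by simp
  moreover have "p powr (1 - \<beta>) = inverse (p powr (\<beta> - 1))"
    by (metis minus_diff_eq powr_minus)
  ultimately have "1 \<le> p powr (1 - \<beta>)"
    using \<open>0 < p\<close> by (simp add: one_le_inverse)
  then have "a powr \<beta> \<le> a powr \<beta> * p powr (1 - \<beta>)"
    using a_pos by simp
  then have "a powr \<beta> \<le> M"
    using crit[OF a_pos] by linarith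
  then have "(a powr \<beta>) powr (1 / \<beta>) \<le> M powr (1 / \<beta>)"
    using assms by (intro powr_mono2) auto
  then show ?thesis
    using a_pos assms by (simp add: powr_powr)
qed

lemma pde_beta_greedy_crit_le_decrease:
  fixes u :: "'a::real_inner"
  assumes greedy: "pde_beta_greedy \<beta> Lam u lam" and v: "v \<in> Lam" and "0 < \<beta>"
    and nz: "inner v (resid u lam i) \<noteq> 0"
  shows "\<bar>inner v (resid u lam i)\<bar> powr \<beta> * power_fun (sel_set lam i) v powr (1 - \<beta>)
    \<le> power_fun (sel_set lam i) (lam (Suc i)) * resid_decrease u lam i powr (\<beta> / 2)"
proof -
  have "\<bar>inner v (resid u lam i)\<bar> powr \<beta> * power_fun (sel_set lam i) v powr (1 - \<beta>)
    \<le> \<bar>inner (lam (Suc i)) (resid u lam i)\<bar> powr \<beta> *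
      power_fun (sel_set lam i) (lam (Suc i)) powr (1 - \<beta>)"
    using pde_beta_greedy_crit_le[OF greedy v nz] assms by (simp add: greedy_crit_def)
  also have "\<dots> \<le> power_fun (sel_set lam i) (lam (Suc i)) * resid_decrease u lam i powr (\<beta> / 2)"
    using inner_next_resid_sq_le[of lam i u] resid_decrease_nonneg assms
    by (intro greedy_crit_le_decrease) (auto simp: power_fun_def)
  finally show ?thesis .
qed

lemma pde_beta_greedy_step_0:
  fixes u :: "'a::real_inner"
  assumes "pde_beta_greedy 0 Lam u lam" "v \<in> Lam"
  shows "\<bar>inner v (resid u lam i)\<bar> \<le> norm (resid u lam i) * power_fun (sel_set lam i) (lam (Suc i))"
proof (cases "inner v (resid u lam i) = 0")
  case False
  have "\<bar>inner v (resid u lam i)\<bar> \<le> power_fun (sel_set lam i) v * norm (resid u lam i)"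
    by (rule abs_inner_resid_le)
  also have "\<dots> \<le> power_fun (sel_set lam i) (lam (Suc i)) * norm (resid u lam i)"
    using pde_beta_greedy_crit_le[OF assms False]
    by (intro mult_right_mono) (auto simp: greedy_crit_def)
  finally show ?thesis by (simp add: mult.commute)
qed (simp add: power_fun_def)

lemma pde_beta_greedy_step_le1:
  fixes u :: "'a::real_inner"
  assumes greedy: "pde_beta_greedy \<beta> Lam u lam" and v: "v \<in> Lam" and "0 < \<beta>" "\<beta> \<le> 1"
  shows "\<bar>inner v (resid u lam i)\<bar> \<le> norm (resid u lam i) powr (1 - \<beta>) *
    (power_fun (sel_set lam i) (lam (Suc i)) * resid_decrease u lam i powr (\<beta> / 2))"
proof (rule le_of_greedy_crit_le1)
  show "\<bar>inner v (resid u lam i)\<bar> \<le> norm (resid u lam i) * power_fun (sel_set lam i) v"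
    using abs_inner_resid_le by (simp add: mult.commute)
  show "\<bar>inner v (resid u lam i)\<bar> powr \<beta> * power_fun (sel_set lam i) v powr (1 - \<beta>)
    \<le> power_fun (sel_set lam i) (lam (Suc i)) * resid_decrease u lam i powr (\<beta> / 2)"
    if "0 < \<bar>inner v (resid u lam i)\<bar>"
    using pde_beta_greedy_crit_le_decrease[OF greedy v] that assms by simp
qed (use assms resid_decrease_nonneg in \<open>auto simp: power_fun_def\<close>)

lemma pde_beta_greedy_step_gt1:
  fixes u :: "'a::real_inner"
  assumes greedy: "pde_beta_greedy \<beta> Lam u lam" and v: "v \<in> Lam" and "1 < \<beta>"
    and "norm v \<le> 1"
  shows "\<bar>inner v (resid u lam i)\<bar> \<le>
    power_fun (sel_set lam i) (lam (Suc i)) powr (1 / \<beta>) * resid_decrease u lam i powr (1 / 2)"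
proof -
  let ?P = "power_fun (sel_set lam i) (lam (Suc i))" and ?d = "resid_decrease u lam i"
  have "\<bar>inner v (resid u lam i)\<bar> \<le> (?P * ?d powr (\<beta> / 2)) powr (1 / \<beta>)"
  proof (rule le_of_greedy_crit_gt1)
    show "\<bar>inner v (resid u lam i)\<bar> \<le> norm (resid u lam i) * power_fun (sel_set lam i) v"
      using abs_inner_resid_le by (simp add: mult.commute)
    show "power_fun (sel_set lam i) v \<le> 1"
      using power_fun_le_norm[OF finite_sel_set, of lam i v] assms by simp
    show "\<bar>inner v (resid u lam i)\<bar> powr \<beta> * power_fun (sel_set lam i) v powr (1 - \<beta>)
      \<le> ?P * ?d powr (\<beta> / 2)"
      if "0 < \<bar>inner v (resid u lam i)\<bar>"
      using pde_beta_greedy_crit_le_decrease[OF greedy v] that assms by simp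
  qed (use assms resid_decrease_nonneg in \<open>auto simp: power_fun_def\<close>)
  also have "\<dots> = ?P powr (1 / \<beta>) * ?d powr (1 / 2)"
    using assms by (simp add: powr_mult powr_powr)
  finally show ?thesis .
qed

lemma SUP_nonneg_le:
  fixes f :: "'b \<Rightarrow> real"
  assumes "A \<noteq> {}" "\<And>x. x \<in> A \<Longrightarrow> 0 \<le> f x" "\<And>x. x \<in> A \<Longrightarrow> f x \<le> B"
  shows "0 \<le> (SUP x\<in>A. f x) \<and> (SUP x\<in>A. f x) \<le> B"
proof
  obtain x where "x \<in> A" using assms(1) by blast
  moreover have "bdd_above (f ` A)"
    using assms(3) by (rule bdd_aboveI2)
  ultimately show "0 \<le> (SUP x\<in>A. f x)"
    using assms(2) by (meson cSUP_upper2)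
  show "(SUP x\<in>A. f x) \<le> B"
    using assms by (intro cSUP_least) auto
qed

lemma prod_root_le_of_bounds:
  fixes s Q d :: "'b \<Rightarrow> real"
  assumes I: "finite I" "card I = n" "1 \<le> n"
    and s: "\<And>i. i \<in> I \<Longrightarrow> 0 \<le> s i \<and> s i \<le> C * (Q i * d i powr \<gamma>)"
    and C: "0 \<le> C" and Q: "\<And>i. i \<in> I \<Longrightarrow> 0 \<le> Q i" and d: "\<And>i. i \<in> I \<Longrightarrow> 0 \<le> d i"
    and "0 \<le> \<gamma>" and sum_d: "sum d I \<le> D"
  shows "(\<Prod>i\<in>I. s i) powr (1 / n) \<le> C * (\<Prod>i\<in>I. Q i) powr (1 / n) * (D / n) powr \<gamma>"
proof -
  have "(\<Prod>i\<in>I. d i) powr (1 / n) \<le> (\<Sum>i\<in>I. d i / n)"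
    using arith_geom_mean[OF I(1)] I d by fastforce
  also have "\<dots> \<le> D / n"
    using sum_d by (simp add: divide_right_mono flip: sum_divide_distrib)
  finally have geom_mean_d: "(\<Prod>i\<in>I. d i) powr (1 / n) \<le> D / n" .
  have C_root: "(C ^ n) powr (1 / n) = C"
    using C I(3) by (simp add: powr_powr flip: powr_realpow')
  have "(\<Prod>i\<in>I. s i) \<le> (\<Prod>i\<in>I. C * (Q i * d i powr \<gamma>))"
    using s by (intro prod_mono) auto
  also have "\<dots> = C ^ n * (\<Prod>i\<in>I. Q i) * (\<Prod>i\<in>I. d i) powr \<gamma>"
    using I by (simp add: prod.distrib prod_powr_distrib)
  finally have "(\<Prod>i\<in>I. s i) powr (1 / n)
      \<le> (C ^ n * (\<Prod>i\<in>I. Q i) * (\<Prod>i\<in>I. d i) powr \<gamma>) powr (1 / n)"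
    using s by (intro powr_mono2 prod_nonneg) auto
  also have "\<dots> = C * (\<Prod>i\<in>I. Q i) powr (1 / n) * ((\<Prod>i\<in>I. d i) powr (1 / n)) powr \<gamma>"
    by (simp add: powr_mult powr_powr C_root mult.commute)
  also have "\<dots> \<le> C * (\<Prod>i\<in>I. Q i) powr (1 / n) * (D / n) powr \<gamma>"
    using C Q d geom_mean_d \<open>0 \<le> \<gamma>\<close> by (intro mult_left_mono powr_mono2) (auto intro: prod_nonneg)
  finally show ?thesis .
qed

lemma sq_div_powr_half:
  fixes R m \<gamma> :: real
  assumes "0 \<le> R"
  shows "(R\<^sup>2 / m) powr (\<gamma> / 2) = R powr \<gamma> * m powr (- \<gamma> / 2)"
proof -
  have "(R\<^sup>2 / m) powr (\<gamma> / 2) = (R powr 2) powr (\<gamma> / 2) / m powr (\<gamma> / 2)"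
    using assms by (simp add: powr_divide)
  then show ?thesis
    by (simp add: powr_powr powr_minus_divide)
qed

lemma pde_beta_greedy_rate_le1:
  fixes u :: "'a::real_inner"
  assumes greedy: "pde_beta_greedy \<beta> Lam u lam" and "0 \<le> \<beta>" "\<beta> \<le> 1" and "1 \<le> n"
  shows "(\<Prod>i=n+1..2*n. (SUP v\<in>Lam. \<bar>inner v (resid u lam i)\<bar>)) powr (1 / real n)
    \<le> real n powr (- \<beta> / 2) * norm (resid u lam (n+1)) *
      (\<Prod>i=n+1..2*n. power_fun (sel_set lam i) (lam (i+1))) powr (1 / real n)"
proof -
  define R where "R = norm (resid u lam (n+1))"
  have I: "finite {n+1..2*n}" "card {n+1..2*n} = n" by auto
  have Lam: "Lam \<noteq> {}" using greedy by (auto simp: pde_beta_greedy_def)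
  have R: "norm (resid u lam i) \<le> R" if "i \<in> {n+1..2*n}" for i
    using that norm_resid_antimono by (auto simp: R_def)
  show ?thesis
  proof (cases "\<beta> = 0")
    case True
    txt \<open>Here d_i^(\<beta>/2) is replaced by the constant 1, as 0 powr 0 = 0.\<close>
    have "(\<Prod>i=n+1..2*n. (SUP v\<in>Lam. \<bar>inner v (resid u lam i)\<bar>)) powr (1 / real n)
      \<le> R * (\<Prod>i=n+1..2*n. power_fun (sel_set lam i) (lam (i+1))) powr (1 / real n) * (real n / n) powr 0"
    proof (rule prod_root_le_of_bounds[OF I \<open>1 \<le> n\<close>, where d="\<lambda>_. 1"])
      fix i assume i: "i \<in> {n+1..2*n}"
      have "\<bar>inner v (resid u lam i)\<bar> \<le> R * power_fun (sel_set lam i) (lam (i+1))" if "v \<in> Lam" for v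
      proof -
        have "\<bar>inner v (resid u lam i)\<bar> \<le> norm (resid u lam i) * power_fun (sel_set lam i) (lam (i+1))"
          using pde_beta_greedy_step_0 greedy True that by simp
        also have "\<dots> \<le> R * power_fun (sel_set lam i) (lam (i+1))"
          using R[OF i] by (intro mult_right_mono) (simp_all add: power_fun_def)
        finally show ?thesis .
      qed
      then show "0 \<le> (SUP v\<in>Lam. \<bar>inner v (resid u lam i)\<bar>) \<and>
          (SUP v\<in>Lam. \<bar>inner v (resid u lam i)\<bar>) \<le> R * (power_fun (sel_set lam i) (lam (i+1)) * 1 powr 0)"
        by (intro SUP_nonneg_le[OF Lam]) auto
    qed (auto simp: R_def power_fun_def)
    then show ?thesis using True \<open>1 \<le> n\<close> by (simp add: R_def)
  next
    case False
    have "(\<Prod>i=n+1..2*n. (SUP v\<in>Lam. \<bar>inner v (resid u lam i)\<bar>)) powr (1 / real n)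
      \<le> R powr (1 - \<beta>) * (\<Prod>i=n+1..2*n. power_fun (sel_set lam i) (lam (i+1))) powr (1 / real n) *
        (R\<^sup>2 / n) powr (\<beta> / 2)"
    proof (rule prod_root_le_of_bounds[OF I \<open>1 \<le> n\<close>, where d="resid_decrease u lam"])
      fix i assume i: "i \<in> {n+1..2*n}"
      let ?B = "power_fun (sel_set lam i) (lam (i+1)) * resid_decrease u lam i powr (\<beta> / 2)"
      have "\<bar>inner v (resid u lam i)\<bar> \<le> R powr (1 - \<beta>) * ?B" if "v \<in> Lam" for v
      proof -
        have "\<bar>inner v (resid u lam i)\<bar> \<le> norm (resid u lam i) powr (1 - \<beta>) * ?B"
          using pde_beta_greedy_step_le1[OF greedy that] False assms by simp
        also have "\<dots> \<le> R powr (1 - \<beta>) * ?B"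
          using R[OF i] assms by (intro mult_right_mono powr_mono2) (simp_all add: power_fun_def)
        finally show ?thesis .
      qed
      then show "0 \<le> (SUP v\<in>Lam. \<bar>inner v (resid u lam i)\<bar>) \<and>
          (SUP v\<in>Lam. \<bar>inner v (resid u lam i)\<bar>) \<le> R powr (1 - \<beta>) * ?B"
        by (intro SUP_nonneg_le[OF Lam]) auto
    qed (use assms sum_resid_decrease_le resid_decrease_nonneg in \<open>auto simp: R_def power_fun_def\<close>)
    also have "\<dots> = (R powr (1 - \<beta>) * (R\<^sup>2 / n) powr (\<beta> / 2)) *
        (\<Prod>i=n+1..2*n. power_fun (sel_set lam i) (lam (i+1))) powr (1 / real n)"
      by (simp only: ac_simps)
    also have "R powr (1 - \<beta>) * (R\<^sup>2 / n) powr (\<beta> / 2) = real n powr (- \<beta> / 2) * R"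
      by (simp add: R_def sq_div_powr_half mult.commute flip: powr_add)
    finally show ?thesis
      by (simp add: R_def)
  qed
qed

lemma pde_beta_greedy_rate_gt1:
  fixes u :: "'a::real_inner"
  assumes "\<forall>v\<in>Lam. norm v \<le> 1" and greedy: "pde_beta_greedy \<beta> Lam u lam"
    and "1 < \<beta>" and "1 \<le> n"
  shows "(\<Prod>i=n+1..2*n. (SUP v\<in>Lam. \<bar>inner v (resid u lam i)\<bar>)) powr (1 / real n)
    \<le> real n powr (- 1 / 2) * norm (resid u lam (n+1)) *
      (\<Prod>i=n+1..2*n. power_fun (sel_set lam i) (lam (i+1)) powr (1 / \<beta>)) powr (1 / real n)"
proof -
  define R where "R = norm (resid u lam (n+1))"
  have I: "finite {n+1..2*n}" "card {n+1..2*n} = n" by auto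
  have Lam: "Lam \<noteq> {}" using greedy by (auto simp: pde_beta_greedy_def)
  have "(\<Prod>i=n+1..2*n. (SUP v\<in>Lam. \<bar>inner v (resid u lam i)\<bar>)) powr (1 / real n)
    \<le> 1 * (\<Prod>i=n+1..2*n. power_fun (sel_set lam i) (lam (i+1)) powr (1 / \<beta>)) powr (1 / real n) *
      (R\<^sup>2 / n) powr (1 / 2)"
  proof (rule prod_root_le_of_bounds[OF I \<open>1 \<le> n\<close>, where d="resid_decrease u lam"])
    fix i
    show "0 \<le> (SUP v\<in>Lam. \<bar>inner v (resid u lam i)\<bar>) \<and>
        (SUP v\<in>Lam. \<bar>inner v (resid u lam i)\<bar>) \<le> 1 *
          (power_fun (sel_set lam i) (lam (i+1)) powr (1 / \<beta>) * resid_decrease u lam i powr (1 / 2))"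
      using pde_beta_greedy_step_gt1[OF greedy] assms by (intro SUP_nonneg_le[OF Lam]) auto
  qed (use sum_resid_decrease_le resid_decrease_nonneg in \<open>auto simp: R_def\<close>)
  also have "(R\<^sup>2 / n) powr (1 / 2) = R * real n powr (- 1 / 2)"
    using sq_div_powr_half[of R n 1] by (simp add: R_def)
  finally show ?thesis
    by (simp add: R_def ac_simps)
qed

theorem theorem4p6:
  fixes u :: "'a::{real_inner, complete_space}" and Lam :: "'a set"
    and lam :: "nat \<Rightarrow> 'a" and \<beta> :: real and n :: nat
  assumes "\<forall>v\<in>Lam. norm v \<le> 1"
    and "\<beta> \<ge> 0"
    and "pde_beta_greedy \<beta> Lam u lam"
    and "n \<ge> 1"
  shows "(\<beta> \<le> 1 \<longrightarrow>
           (\<Prod>i=n+1..2*n. (SUP v\<in>Lam. \<bar>inner v (resid u lam i)\<bar>)) powr (1 / real n)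
           \<le> real n powr (- \<beta> / 2) * norm (resid u lam (n+1)) *
             (\<Prod>i=n+1..2*n. power_fun (sel_set lam i) (lam (i+1))) powr (1 / real n))
       \<and> (\<beta> > 1 \<longrightarrow>
           (\<Prod>i=n+1..2*n. (SUP v\<in>Lam. \<bar>inner v (resid u lam i)\<bar>)) powr (1 / real n)
           \<le> real n powr (- 1 / 2) * norm (resid u lam (n+1)) *
             (\<Prod>i=n+1..2*n. power_fun (sel_set lam i) (lam (i+1)) powr (1 / \<beta>)) powr (1 / real n))"
  using pde_beta_greedy_rate_le1[OF assms(3,2) _ assms(4)]
    pde_beta_greedy_rate_gt1[OF assms(1,3) _ assms(4)]
  by blast

end
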